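(* Let $n,m\ge 1$, let $\mu\in\mathbb{R}^n_{\ge 0}$ and $\nu\in\mathbb{R}^m_{\ge 0}$ be probability vectors (nonnegative entries summing to $1$), and let $D_X\in\mathbb{R}^{n\times n}$, $D_Y\in\mathbb{R}^{m\times m}$ be symmetric matrices. Let $C_1=\{\pi\in\mathbb{R}^{n\times m}:\pi\ge 0,\ \pi\mathbf{1}_m=\mu\}$ and $C_2=\{\pi\in\mathbb{R}^{n\times m}:\pi\ge 0,\ \pi^T\mathbf{1}_n=\nu\}$, and let $f(\pi)=-\mathrm{Tr}(D_X\pi D_Y\pi^T)$. Let $$\mathcal{X}=\{\pi\in C_1\cap C_2:\ 0\in\nabla f(\pi)+\mathcal{N}_{C_1}(\pi)+\mathcal{N}_{C_2}(\pi)\}$$ be the critical point set of the problem $\min\{f(\pi):\pi\in C_1\cap C_2\}$. Then there exist scalars $\epsilon>0$ and $\tau>0$ such that for every $\pi\in\mathbb{R}^{n\times m}$ with $\|\pi-\mathrm{proj}_{C_1\cap C_2}(\pi+D_X\pi D_Y)\|\le\epsilon$ we have $$\mathrm{dist}(\pi,\mathcal{X})\le\tau\,\|\pi-\mathrm{proj}_{C_1\cap C_2}(\pi+D_X\pi D_Y)\|.$$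
   Context: $\|\cdot\|$ is the Frobenius (entrywise $\ell_2$) norm on $\mathbb{R}^{n\times m}$; $\mathrm{dist}(x,C)=\min_{y\in C}\|x-y\|$ and $\mathrm{proj}_C(x)=\arg\min_{y\in C}\|x-y\|$ for a closed convex set $C$. $\mathcal{N}_C(\pi)$ denotes the normal cone of the convex set $C$ at $\pi$. $\pi\ge0$ means entrywise nonnegativity; $\mathbf{1}_k$ is the all-ones vector in $\mathbb{R}^k$. *)

theory Defs
  imports "HOL-Analysis.Analysis"
begin

text \<open>Matrices in R^{n x m} are modelled as real^'m^'n (rows indexed by 'n).
  The norm on this type is the Frobenius norm.\<close>

definition normal_cone :: "'a::real_inner set \<Rightarrow> 'a \<Rightarrow> 'a set" where
  "normal_cone C x = {v. \<forall>y\<in>C. inner v (y - x) \<le> 0}"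

definition C1 :: "real^'n \<Rightarrow> (real^'m^'n) set" where
  "C1 \<mu> = {p. (\<forall>i j. 0 \<le> p $ i $ j) \<and> p *v (\<chi> j. 1) = \<mu>}"

definition C2 :: "real^'m \<Rightarrow> (real^'m^'n) set" where
  "C2 \<nu> = {p. (\<forall>i j. 0 \<le> p $ i $ j) \<and> transpose p *v (\<chi> i. 1) = \<nu>}"

definition gw_obj :: "real^'n^'n \<Rightarrow> real^'m^'m \<Rightarrow> real^'m^'n \<Rightarrow> real" where
  "gw_obj DX DY p = - trace (DX ** p ** DY ** transpose p)"

definition crit_set :: "real^'n \<Rightarrow> real^'m \<Rightarrow> real^'n^'n \<Rightarrow> real^'m^'m \<Rightarrow> (real^'m^'n) set" where
  "crit_set \<mu> \<nu> DX DY = {p \<in> C1 \<mu> \<inter> C2 \<nu>. \<exists>g u v.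
     (gw_obj DX DY has_derivative (\<lambda>h. inner g h)) (at p) \<and>
     u \<in> normal_cone (C1 \<mu>) p \<and> v \<in> normal_cone (C2 \<nu>) p \<and> g + u + v = 0}"

end

(* The critical points are the KKT points of the quadratic form p \<mapsto> <DX p DY, p> over the
   polyhedron C = C1 \<inter> C2, and p \<mapsto> DX p DY is self-adjoint. For z = proj_C (p + DX p DY) and
   y = p - z, the optimality condition of the projection says that p, together with the
   multipliers of the constraints active at z, solves a linear system in which y enters the
   right-hand side only, and which for y = 0 describes KKT points. Hoffman's error bound for
   polyhedra puts a solution of the unperturbed system within O(|y|) of any solution of the
   perturbed one, and an unsolvable system stays unsolvable under small perturbations; as there
   are only finitely many active sets, the constants are uniform.
   Hoffman's bound itself comes from projecting onto the polyhedron: x minus its projection lies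
   in the cone of the active normals, and every vector of a finitely generated cone has conic
   coefficients of total weight O(its norm) (Caratheodory's reduction to independent
   generators, plus duality for those). *)

theory Submission
  imports Defs
begin

section \<open>Polyhedra, normal cones and Farkas' lemma\<close>

definition feasible_set :: "('i \<Rightarrow> 'a::real_inner) \<Rightarrow> ('i \<Rightarrow> real) \<Rightarrow> 'i set \<Rightarrow> 'a set" where
  "feasible_set a b I = {x. \<forall>i\<in>I. inner (a i) x \<le> b i}"

definition active_set :: "('i \<Rightarrow> 'a::real_inner) \<Rightarrow> ('i \<Rightarrow> real) \<Rightarrow> 'i set \<Rightarrow> 'a \<Rightarrow> 'i set" where
  "active_set a b I x = {i\<in>I. inner (a i) x = b i}"

definition violation :: "('i \<Rightarrow> 'a::real_inner) \<Rightarrow> ('i \<Rightarrow> real) \<Rightarrow> 'i set \<Rightarrow> 'a \<Rightarrow> real" where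
  "violation a b I x = (\<Sum>i\<in>I. max 0 (inner (a i) x - b i))"

definition conic_combinations :: "('i \<Rightarrow> 'a::real_vector) \<Rightarrow> 'i set \<Rightarrow> 'a set" where
  "conic_combinations a J = {\<Sum>i\<in>J. l i *\<^sub>R a i | l. \<forall>i\<in>J. 0 \<le> l i}"

lemma closed_feasible_set: "closed (feasible_set a b I)"
  unfolding feasible_set_def Collect_ball_eq by (simp add: closed_INT closed_halfspace_le)

lemma convex_feasible_set: "convex (feasible_set a b I)"
  unfolding feasible_set_def Collect_ball_eq by (simp add: convex_INT convex_halfspace_le)

lemma violation_nonneg: "0 \<le> violation a b I x"
  unfolding violation_def by (simp add: sum_nonneg)

lemma constraint_excess_le_violation:
  assumes "finite I" "i \<in> I"
  shows "inner (a i) x - b i \<le> violation a b I x"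
proof -
  have "inner (a i) x - b i \<le> max 0 (inner (a i) x - b i)" by simp
  also have "\<dots> \<le> violation a b I x"
    unfolding violation_def by (rule member_le_sum) (use assms in auto)
  finally show ?thesis .
qed

lemma violation_le_perturbation:
  assumes "\<forall>i\<in>I. inner (a i) w \<le> b i + inner (e i) y"
  shows "violation a b I w \<le> (\<Sum>i\<in>I. norm (e i)) * norm y"
  unfolding violation_def sum_distrib_right
proof (rule sum_mono)
  fix i assume "i \<in> I"
  then show "max 0 (inner (a i) w - b i) \<le> norm (e i) * norm y"
    using assms norm_cauchy_schwarz[of "e i" y] by auto
qed

lemma closest_point_normal_cone:
  assumes "convex S" "closed S"
  shows "x - closest_point S x \<in> normal_cone S (closest_point S x)"
  using closest_point_dot[OF assms] by (auto simp: normal_cone_def)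

lemma normal_cone_scaleR: "0 \<le> c \<Longrightarrow> v \<in> normal_cone S x \<Longrightarrow> c *\<^sub>R v \<in> normal_cone S x"
  by (auto simp: normal_cone_def mult_nonneg_nonpos)

lemma mem_conic_combinations_iff:
  assumes "finite I" "J \<subseteq> I"
  shows "v \<in> conic_combinations a J \<longleftrightarrow>
    (\<exists>l. (\<forall>i\<in>I. 0 \<le> l i) \<and> (\<forall>i\<in>I - J. l i = 0) \<and> v = (\<Sum>i\<in>I. l i *\<^sub>R a i))"
proof
  assume "v \<in> conic_combinations a J"
  then obtain l where l: "\<forall>i\<in>J. 0 \<le> l i" "v = (\<Sum>i\<in>J. l i *\<^sub>R a i)"
    by (auto simp: conic_combinations_def)
  define l' where "l' i = (if i \<in> J then l i else 0)" for i
  have "(\<Sum>i\<in>I. l' i *\<^sub>R a i) = (\<Sum>i\<in>J. l' i *\<^sub>R a i)"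
    by (rule sum.mono_neutral_right) (use assms in \<open>auto simp: l'_def\<close>)
  then show "\<exists>l. (\<forall>i\<in>I. 0 \<le> l i) \<and> (\<forall>i\<in>I - J. l i = 0) \<and> v = (\<Sum>i\<in>I. l i *\<^sub>R a i)"
    using l by (intro exI[of _ l']) (auto simp: l'_def)
next
  assume "\<exists>l. (\<forall>i\<in>I. 0 \<le> l i) \<and> (\<forall>i\<in>I - J. l i = 0) \<and> v = (\<Sum>i\<in>I. l i *\<^sub>R a i)"
  then obtain l where l: "\<forall>i\<in>I. 0 \<le> l i" "\<forall>i\<in>I - J. l i = 0" "v = (\<Sum>i\<in>I. l i *\<^sub>R a i)"
    by blast
  have "(\<Sum>i\<in>I. l i *\<^sub>R a i) = (\<Sum>i\<in>J. l i *\<^sub>R a i)"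
    by (rule sum.mono_neutral_right) (use assms l in auto)
  then show "v \<in> conic_combinations a J"
    using l assms(2) by (auto simp: conic_combinations_def)
qed

lemma convex_cone_conic_combinations: "convex_cone (conic_combinations a J)"
  unfolding convex_cone_iff conic_combinations_def
proof (intro conjI ballI allI impI)
  show "0 \<in> {\<Sum>i\<in>J. l i *\<^sub>R a i | l. \<forall>i\<in>J. 0 \<le> l i}"
    by (auto intro: exI[of _ "\<lambda>_. 0"])
next
  fix x y assume "x \<in> {\<Sum>i\<in>J. l i *\<^sub>R a i | l. \<forall>i\<in>J. 0 \<le> l i}"
    "y \<in> {\<Sum>i\<in>J. l i *\<^sub>R a i | l. \<forall>i\<in>J. 0 \<le> l i}"
  then obtain l l' where "\<forall>i\<in>J. 0 \<le> l i" "x = (\<Sum>i\<in>J. l i *\<^sub>R a i)"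
    "\<forall>i\<in>J. 0 \<le> l' i" "y = (\<Sum>i\<in>J. l' i *\<^sub>R a i)" by blast
  then show "x + y \<in> {\<Sum>i\<in>J. l i *\<^sub>R a i | l. \<forall>i\<in>J. 0 \<le> l i}"
    by (auto intro!: exI[of _ "\<lambda>i. l i + l' i"] simp: scaleR_add_left sum.distrib)
next
  fix x and c :: real assume "x \<in> {\<Sum>i\<in>J. l i *\<^sub>R a i | l. \<forall>i\<in>J. 0 \<le> l i}" "0 \<le> c"
  then obtain l where "\<forall>i\<in>J. 0 \<le> l i" "x = (\<Sum>i\<in>J. l i *\<^sub>R a i)" by blast
  with \<open>0 \<le> c\<close> show "c *\<^sub>R x \<in> {\<Sum>i\<in>J. l i *\<^sub>R a i | l. \<forall>i\<in>J. 0 \<le> l i}"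
    by (auto intro!: exI[of _ "\<lambda>i. c * l i"] simp: scaleR_sum_right)
qed

lemma image_subset_conic_combinations:
  assumes "finite J"
  shows "a ` J \<subseteq> conic_combinations a J"
proof
  fix x assume "x \<in> a ` J"
  then obtain j where "j \<in> J" "x = a j" by auto
  then have "x = (\<Sum>i\<in>J. (if i = j then 1 else 0) *\<^sub>R a i)"
    using assms by (simp add: if_distrib[of "\<lambda>c. c *\<^sub>R _"] cong: if_cong)
  then show "x \<in> conic_combinations a J"
    unfolding conic_combinations_def by (intro CollectI exI[of _ "\<lambda>i. if i = j then 1 else 0"]) auto
qed

lemma conic_combinations_active_subset_normal_cone:
  "conic_combinations a (active_set a b I z) \<subseteq> normal_cone (feasible_set a b I) z"
proof
  fix v assume "v \<in> conic_combinations a (active_set a b I z)"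
  then obtain l where l: "\<forall>i\<in>active_set a b I z. 0 \<le> l i"
      "v = (\<Sum>i\<in>active_set a b I z. l i *\<^sub>R a i)"
    by (auto simp: conic_combinations_def)
  show "v \<in> normal_cone (feasible_set a b I) z"
    unfolding normal_cone_def
  proof (intro CollectI ballI)
    fix y assume "y \<in> feasible_set a b I"
    then have "l i * inner (a i) (y - z) \<le> 0" if "i \<in> active_set a b I z" for i
      using l(1) that
      by (auto simp: feasible_set_def active_set_def inner_diff_right intro!: mult_nonneg_nonpos)
    then show "inner v (y - z) \<le> 0"
      unfolding l(2) inner_sum_left by (simp add: sum_nonpos)
  qed
qed

lemma farkas_alternative:
  fixes a :: "'i \<Rightarrow> 'a::euclidean_space"
  assumes "finite I" "d \<notin> conic_combinations a I"
  shows "\<exists>h. 0 < inner h d \<and> (\<forall>i\<in>I. inner h (a i) \<le> 0)"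
proof -
  define K where "K = convex_cone hull (a ` I)"
  have "K \<subseteq> conic_combinations a I"
    unfolding K_def
    by (rule hull_minimal[OF image_subset_conic_combinations[OF assms(1)]])
      (rule convex_cone_conic_combinations)
  then have "d \<notin> K" using assms(2) by blast
  moreover have "closed K" "convex K"
    unfolding K_def using assms(1) by (simp_all add: closed_convex_cone_hull convex_convex_cone_hull)
  ultimately obtain c \<beta> where c: "inner c d < \<beta>" "\<forall>x\<in>K. \<beta> < inner c x"
    using separating_hyperplane_closed_point by blast
  have "0 \<in> K" unfolding K_def by (rule convex_cone_hull_contains_0)
  then have \<beta>: "\<beta> < 0" using c(2) by force
  have "0 \<le> inner c (a i)" if "i \<in> I" for i
  proof (rule ccontr)
    assume neg: "\<not> 0 \<le> inner c (a i)"
    have "(\<beta> / inner c (a i)) *\<^sub>R a i \<in> K"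
      unfolding K_def using that neg \<beta>
      by (intro convex_cone_hull_mul hull_inc) (auto simp: divide_nonpos_neg)
    then show False using c(2) neg by fastforce
  qed
  then show ?thesis using c \<beta> by (intro exI[of _ "- c"]) auto
qed

lemma eventually_feasible_direction:
  assumes "finite I" "z \<in> feasible_set a b I" "\<forall>i\<in>active_set a b I z. inner (a i) h \<le> 0"
  shows "\<forall>\<^sub>F t in at_right 0. z + t *\<^sub>R h \<in> feasible_set a b I"
proof -
  have "\<forall>\<^sub>F t in at_right 0. inner (a i) (z + t *\<^sub>R h) \<le> b i" if "i \<in> I" for i
  proof (cases "i \<in> active_set a b I z")
    case True
    then show ?thesis
      using assms(3) by (auto simp: active_set_def inner_add_right
          intro!: eventually_mono[OF eventually_at_right_less] mult_nonneg_nonpos)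
  next
    case False
    then have "inner (a i) z < b i" using assms(2) that by (auto simp: feasible_set_def active_set_def less_le)
    moreover have "((\<lambda>t. inner (a i) (z + t *\<^sub>R h)) \<longlongrightarrow> inner (a i) z) (at_right 0)"
      by (auto simp: inner_add_right intro!: tendsto_eq_intros)
    ultimately have "\<forall>\<^sub>F t in at_right 0. inner (a i) (z + t *\<^sub>R h) < b i"
      by (rule order_tendstoD(2)[rotated])
    then show ?thesis by (rule eventually_mono) simp
  qed
  then show ?thesis
    using assms(1) unfolding feasible_set_def by (auto intro: eventually_ball_finite)
qed

lemma normal_cone_feasible_set:
  fixes a :: "'i \<Rightarrow> 'a::euclidean_space"
  assumes "finite I" "z \<in> feasible_set a b I"
  shows "normal_cone (feasible_set a b I) z = conic_combinations a (active_set a b I z)"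
proof
  show "normal_cone (feasible_set a b I) z \<subseteq> conic_combinations a (active_set a b I z)"
  proof
    fix v assume v: "v \<in> normal_cone (feasible_set a b I) z"
    show "v \<in> conic_combinations a (active_set a b I z)"
    proof (rule ccontr)
      assume "v \<notin> conic_combinations a (active_set a b I z)"
      moreover have "finite (active_set a b I z)"
        using assms(1) by (simp add: active_set_def)
      ultimately obtain h where h: "0 < inner h v" "\<forall>i\<in>active_set a b I z. inner h (a i) \<le> 0"
        using farkas_alternative by blast
      have "\<forall>\<^sub>F t in at_right 0. 0 < t \<and> z + t *\<^sub>R h \<in> feasible_set a b I"
        using h(2) by (intro eventually_conj eventually_at_right_less
            eventually_feasible_direction[OF assms]) (simp add: inner_commute)
      then obtain t where "0 < t" "z + t *\<^sub>R h \<in> feasible_set a b I"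
        using eventually_happens'[OF trivial_limit_at_right_real] by blast
      then have "t * inner h v \<le> 0"
        using v by (auto simp: normal_cone_def inner_commute)
      with \<open>0 < t\<close> h(1) show False by (simp add: mult_le_0_iff)
    qed
  qed
qed (rule conic_combinations_active_subset_normal_cone)

lemma feasible_set_Int_case_sum:
  "feasible_set a b UNIV \<inter> feasible_set c d UNIV = feasible_set (case_sum a c) (case_sum b d) UNIV"
  by (auto simp: feasible_set_def split_sum_all)

lemma normal_cone_Int_feasible_sets:
  fixes a :: "'k::finite \<Rightarrow> 'a::euclidean_space" and c :: "'l::finite \<Rightarrow> 'a"
  assumes "p \<in> feasible_set a b UNIV" "p \<in> feasible_set c d UNIV"
    and "v \<in> normal_cone (feasible_set a b UNIV \<inter> feasible_set c d UNIV) p"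
  shows "\<exists>u w. u \<in> normal_cone (feasible_set a b UNIV) p \<and> w \<in> normal_cone (feasible_set c d UNIV) p
    \<and> v = u + w"
proof -
  have "p \<in> feasible_set (case_sum a c) (case_sum b d) UNIV"
    using assms(1,2) by (simp flip: feasible_set_Int_case_sum)
  moreover have "v \<in> normal_cone (feasible_set (case_sum a c) (case_sum b d) UNIV) p"
    using assms(3) by (simp add: feasible_set_Int_case_sum)
  ultimately have "v \<in> conic_combinations (case_sum a c) (active_set (case_sum a c) (case_sum b d) UNIV p)"
    by (simp add: normal_cone_feasible_set)
  then obtain l where l: "\<forall>k. 0 \<le> l k"
      "\<forall>k\<in>UNIV - active_set (case_sum a c) (case_sum b d) UNIV p. l k = 0"
      "v = (\<Sum>k\<in>UNIV. l k *\<^sub>R case_sum a c k)"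
    unfolding mem_conic_combinations_iff[OF finite subset_UNIV] by auto
  have "(\<Sum>k\<in>UNIV. l (Inl k) *\<^sub>R a k) \<in> conic_combinations a (active_set a b UNIV p)"
    unfolding mem_conic_combinations_iff[OF finite subset_UNIV]
    using l(1,2) by (intro exI[of _ "l \<circ> Inl"]) (auto simp: active_set_def)
  moreover have "(\<Sum>k\<in>UNIV. l (Inr k) *\<^sub>R c k) \<in> conic_combinations c (active_set c d UNIV p)"
    unfolding mem_conic_combinations_iff[OF finite subset_UNIV]
    using l(1,2) by (intro exI[of _ "l \<circ> Inr"]) (auto simp: active_set_def)
  moreover have "v = (\<Sum>k\<in>UNIV. l (Inl k) *\<^sub>R a k) + (\<Sum>k\<in>UNIV. l (Inr k) *\<^sub>R c k)"
    using sum.Plus[of "UNIV :: 'k set" "UNIV :: 'l set" "\<lambda>k. l k *\<^sub>R case_sum a c k"]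
    by (simp add: l(3) o_def)
  ultimately show ?thesis
    using conic_combinations_active_subset_normal_cone[of a b UNIV p]
      conic_combinations_active_subset_normal_cone[of c d UNIV p] by blast
qed

section \<open>Hoffman's error bound\<close>

lemma span_image_finite_sum:
  assumes "finite S" "x \<in> span (a ` S)"
  shows "\<exists>u. x = (\<Sum>j\<in>S. u j *\<^sub>R a j)"
  using assms(2)
proof (induction rule: span_induct_alt)
  case base
  show ?case by (auto intro: exI[of _ "\<lambda>_. 0"])
next
  case (step c x y)
  then obtain j u where j: "j \<in> S" "x = a j" and y: "y = (\<Sum>i\<in>S. u i *\<^sub>R a i)" by auto
  have "c *\<^sub>R x + y = (\<Sum>i\<in>S. (u i + (if i = j then c else 0)) *\<^sub>R a i)"
    using assms(1) j y
    by (simp add: scaleR_add_left sum.distrib if_distrib[of "\<lambda>r. r *\<^sub>R _"] cong: if_cong)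
  then show ?case by (intro exI[of _ "\<lambda>i. u i + (if i = j then c else 0)"])
qed

lemma dual_vector_of_independent_family:
  fixes a :: "'i \<Rightarrow> 'a::euclidean_space"
  assumes "finite J" and indep: "\<And>m. (\<Sum>j\<in>J. m j *\<^sub>R a j) = 0 \<Longrightarrow> \<forall>j\<in>J. m j = 0"
    and "i \<in> J"
  shows "\<exists>w. inner w (a i) = 1 \<and> (\<forall>j\<in>J - {i}. inner w (a j) = 0)"
proof -
  obtain y z where yz: "y \<in> span (a ` (J - {i}))"
      "\<And>w. w \<in> span (a ` (J - {i})) \<Longrightarrow> orthogonal z w" "a i = y + z"
    using orthogonal_subspace_decomp_exists by blast
  have "z \<noteq> 0"
  proof
    assume "z = 0"
    then obtain u where u: "a i = (\<Sum>j\<in>J - {i}. u j *\<^sub>R a j)"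
      using yz(1,3) span_image_finite_sum[of "J - {i}"] assms(1) by auto
    have "(\<Sum>j\<in>J - {i}. (u(i := -1)) j *\<^sub>R a j) = (\<Sum>j\<in>J - {i}. u j *\<^sub>R a j)"
      by (rule sum.cong) auto
    then have "(\<Sum>j\<in>J. (u(i := -1)) j *\<^sub>R a j) = - a i + (\<Sum>j\<in>J - {i}. u j *\<^sub>R a j)"
      using assms(1,3) by (simp add: sum.remove)
    then have "(\<Sum>j\<in>J. (u(i := -1)) j *\<^sub>R a j) = 0" using u by simp
    from indep[OF this] assms(3) show False by fastforce
  qed
  moreover have "inner z (a j) = 0" if "j \<in> J - {i}" for j
    using yz(2)[OF span_base] that by (auto simp: orthogonal_def)
  moreover have "inner z (a i) = inner z z"
    using yz(2)[OF yz(1)] yz(3) by (simp add: orthogonal_def inner_add_right)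
  ultimately show ?thesis by (intro exI[of _ "(1 / inner z z) *\<^sub>R z"]) auto
qed

lemma independent_family_weight_bound:
  fixes a :: "'i \<Rightarrow> 'a::euclidean_space"
  assumes "finite J" and "\<And>m. (\<Sum>j\<in>J. m j *\<^sub>R a j) = 0 \<Longrightarrow> \<forall>j\<in>J. m j = 0"
  shows "\<exists>M. \<forall>l. (\<Sum>i\<in>J. l i) \<le> M * norm (\<Sum>i\<in>J. l i *\<^sub>R a i)"
proof -
  obtain w where w: "\<And>i. i \<in> J \<Longrightarrow> inner (w i) (a i) = 1 \<and> (\<forall>j\<in>J - {i}. inner (w i) (a j) = 0)"
    using dual_vector_of_independent_family[OF assms] by metis
  have coeff: "l i = inner (w i) (\<Sum>j\<in>J. l j *\<^sub>R a j)" if "i \<in> J" for l i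
  proof -
    have "inner (w i) (\<Sum>j\<in>J. l j *\<^sub>R a j) = (\<Sum>j\<in>J. if j = i then l j else 0)"
      unfolding inner_sum_right by (rule sum.cong) (use w[OF that] in auto)
    then show ?thesis using assms(1) that by simp
  qed
  have "(\<Sum>i\<in>J. l i) \<le> (\<Sum>i\<in>J. norm (w i)) * norm (\<Sum>i\<in>J. l i *\<^sub>R a i)" for l
    unfolding sum_distrib_right by (rule sum_mono) (metis coeff norm_cauchy_schwarz)
  then show ?thesis by blast
qed

lemma conic_combination_drop_index:
  fixes a :: "'i \<Rightarrow> 'a::real_vector"
  assumes "finite J" and dep: "(\<Sum>j\<in>J. m j *\<^sub>R a j) = 0" "i0 \<in> J" "m i0 \<noteq> 0"
    and l: "\<forall>i\<in>J. 0 \<le> l i"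
  shows "\<exists>i1\<in>J. \<exists>l'. (\<forall>i\<in>J. 0 \<le> l' i) \<and> l' i1 = 0 \<and>
           (\<Sum>i\<in>J. l' i *\<^sub>R a i) = (\<Sum>i\<in>J. l i *\<^sub>R a i)"
proof -
  define m' where "m' = (if 0 < m i0 then m else - m)"
  have m': "(\<Sum>j\<in>J. m' j *\<^sub>R a j) = 0" "0 < m' i0"
    using dep by (auto simp: m'_def sum_negf)
  define P where "P = {i\<in>J. 0 < m' i}"
  have P: "finite P" "P \<noteq> {}" using assms(1) dep(2) m'(2) by (auto simp: P_def)
  \<comment> \<open>Subtract the largest multiple q of the relation m' that keeps all weights nonnegative;
    the weight at a minimising index i1 drops to zero (Caratheodory's argument).\<close>
  define q where "q = Min ((\<lambda>i. l i / m' i) ` P)"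
  have "q \<in> (\<lambda>i. l i / m' i) ` P" unfolding q_def using P by (intro Min_in) auto
  then obtain i1 where i1: "i1 \<in> P" "q = l i1 / m' i1" by auto
  have q_le: "q \<le> l i / m' i" if "i \<in> P" for i
    using P that unfolding q_def by (intro Min_le) auto
  have "0 \<le> q" using i1 l by (auto simp: P_def)
  have "(\<Sum>i\<in>J. (q * m' i) *\<^sub>R a i) = q *\<^sub>R (\<Sum>i\<in>J. m' i *\<^sub>R a i)"
    by (simp add: scaleR_sum_right)
  with m'(1) have shift: "(\<Sum>i\<in>J. (q * m' i) *\<^sub>R a i) = 0" by simp
  have "0 \<le> l i - q * m' i" if "i \<in> J" for i
  proof (cases "0 < m' i")
    case True
    then show ?thesis using q_le[of i] that by (simp add: P_def field_simps)
  next
    case False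
    then show ?thesis using l that \<open>0 \<le> q\<close> by (smt (verit) mult_nonneg_nonpos)
  qed
  moreover have "(\<Sum>i\<in>J. (l i - q * m' i) *\<^sub>R a i) = (\<Sum>i\<in>J. l i *\<^sub>R a i)"
    using shift by (simp add: scaleR_diff_left sum_subtractf)
  moreover have "l i1 - q * m' i1 = 0" using i1 by (simp add: P_def)
  ultimately show ?thesis
    using i1(1) unfolding P_def by (intro bexI[of _ i1] exI[of _ "\<lambda>i. l i - q * m' i"]) auto
qed

definition bounded_conic_representation :: "('i \<Rightarrow> 'a::real_normed_vector) \<Rightarrow> 'i set \<Rightarrow> real \<Rightarrow> bool" where
  "bounded_conic_representation a J M \<longleftrightarrow>
     (\<forall>v\<in>conic_combinations a J. \<exists>l. (\<forall>i\<in>J. 0 \<le> l i) \<and> v = (\<Sum>i\<in>J. l i *\<^sub>R a i) \<and>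
        (\<Sum>i\<in>J. l i) \<le> M * norm v)"

lemma bounded_conic_representation_mono:
  assumes "bounded_conic_representation a J M" "M \<le> M'"
  shows "bounded_conic_representation a J M'"
proof -
  have "M * norm v \<le> M' * norm v" for v
    using assms(2) by (rule mult_right_mono) simp
  with assms(1) show ?thesis
    unfolding bounded_conic_representation_def by (fastforce intro: order_trans)
qed

lemma bounded_conic_representation_dependent:
  fixes a :: "'i \<Rightarrow> 'a::real_normed_vector"
  assumes "finite J" and dep: "(\<Sum>j\<in>J. m j *\<^sub>R a j) = 0" "i0 \<in> J" "m i0 \<noteq> 0"
    and IH: "\<forall>i\<in>J. bounded_conic_representation a (J - {i}) M"
  shows "bounded_conic_representation a J M"
  unfolding bounded_conic_representation_def
proof
  fix v assume "v \<in> conic_combinations a J"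
  then obtain l where l: "\<forall>i\<in>J. 0 \<le> l i" "v = (\<Sum>i\<in>J. l i *\<^sub>R a i)"
    by (auto simp: conic_combinations_def)
  obtain i1 l' where i1: "i1 \<in> J" and l': "\<forall>i\<in>J. 0 \<le> l' i" "l' i1 = 0"
      "(\<Sum>i\<in>J. l' i *\<^sub>R a i) = (\<Sum>i\<in>J. l i *\<^sub>R a i)"
    using conic_combination_drop_index[OF assms(1) dep l(1)] by blast
  have "(\<Sum>i\<in>J. l' i *\<^sub>R a i) = (\<Sum>i\<in>J - {i1}. l' i *\<^sub>R a i)"
    using assms(1) l'(2) by (intro sum.mono_neutral_right) auto
  then have "v \<in> conic_combinations a (J - {i1})"
    using l(2) l'(1,3) unfolding conic_combinations_def by auto
  moreover have "bounded_conic_representation a (J - {i1}) M" using IH i1 by blast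
  ultimately have "\<exists>l''. (\<forall>i\<in>J - {i1}. 0 \<le> l'' i) \<and> v = (\<Sum>i\<in>J - {i1}. l'' i *\<^sub>R a i) \<and>
      (\<Sum>i\<in>J - {i1}. l'' i) \<le> M * norm v"
    unfolding bounded_conic_representation_def by (rule bspec[rotated])
  then obtain l'' where l'': "\<forall>i\<in>J - {i1}. 0 \<le> l'' i"
      "v = (\<Sum>i\<in>J - {i1}. l'' i *\<^sub>R a i)" "(\<Sum>i\<in>J - {i1}. l'' i) \<le> M * norm v"
    by blast
  have "(\<Sum>i\<in>J. (l''(i1 := 0)) i *\<^sub>R a i) = (\<Sum>i\<in>J - {i1}. l'' i *\<^sub>R a i)"
       "(\<Sum>i\<in>J. (l''(i1 := 0)) i) = (\<Sum>i\<in>J - {i1}. l'' i)"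
    using assms(1) by (auto intro!: sum.mono_neutral_cong_right split: if_split_asm)
  with l'' show "\<exists>l. (\<forall>i\<in>J. 0 \<le> l i) \<and> v = (\<Sum>i\<in>J. l i *\<^sub>R a i) \<and> (\<Sum>i\<in>J. l i) \<le> M * norm v"
    by (intro exI[of _ "l''(i1 := 0)"]) auto
qed

lemma eventually_bounded_conic_representation:
  fixes a :: "'i \<Rightarrow> 'a::euclidean_space"
  assumes "finite J"
  shows "\<forall>\<^sub>F M in at_top. bounded_conic_representation a J M"
  using assms
proof (induction J rule: finite_psubset_induct)
  case (psubset J)
  show ?case
  proof (cases "\<forall>m. (\<Sum>j\<in>J. m j *\<^sub>R a j) = 0 \<longrightarrow> (\<forall>j\<in>J. m j = 0)")
    case True
    then obtain M where "\<forall>l. (\<Sum>i\<in>J. l i) \<le> M * norm (\<Sum>i\<in>J. l i *\<^sub>R a i)"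
      using independent_family_weight_bound[OF psubset.hyps] by blast
    then have "bounded_conic_representation a J M"
      by (auto simp: bounded_conic_representation_def conic_combinations_def)
    then show ?thesis
      unfolding eventually_at_top_linorder using bounded_conic_representation_mono by blast
  next
    case False
    then obtain m i0 where dep: "(\<Sum>j\<in>J. m j *\<^sub>R a j) = 0" "i0 \<in> J" "m i0 \<noteq> 0" by blast
    have "\<forall>\<^sub>F M in at_top. \<forall>i\<in>J. bounded_conic_representation a (J - {i}) M"
      using psubset by (intro eventually_ball_finite) auto
    then show ?thesis
      by (rule eventually_mono) (rule bounded_conic_representation_dependent[OF psubset.hyps dep])
  qed
qed

lemma closest_point_distance_le_violation:
  fixes a :: "'i \<Rightarrow> 'a::euclidean_space"
  assumes "finite I" "feasible_set a b I \<noteq> {}"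
    and M: "0 \<le> M" "\<And>J. J \<subseteq> I \<Longrightarrow> bounded_conic_representation a J M"
  shows "norm (x - closest_point (feasible_set a b I) x) \<le> M * violation a b I x"
proof -
  define z where "z = closest_point (feasible_set a b I) x"
  define J where "J = active_set a b I z"
  have "z \<in> feasible_set a b I"
    unfolding z_def using closed_feasible_set assms(2) by (rule closest_point_in_set)
  then have "x - z \<in> conic_combinations a J"
    using closest_point_normal_cone[OF convex_feasible_set closed_feasible_set]
      normal_cone_feasible_set[OF assms(1)] unfolding J_def z_def by blast
  moreover have "bounded_conic_representation a J M"
    using M(2) by (simp add: J_def active_set_def)
  ultimately obtain l where l: "\<forall>i\<in>J. 0 \<le> l i" "x - z = (\<Sum>i\<in>J. l i *\<^sub>R a i)"
      "(\<Sum>i\<in>J. l i) \<le> M * norm (x - z)"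
    unfolding bounded_conic_representation_def by blast
  have "norm (x - z)^2 = inner (\<Sum>i\<in>J. l i *\<^sub>R a i) (x - z)"
    by (simp add: l(2)[symmetric] power2_norm_eq_inner)
  also have "\<dots> = (\<Sum>i\<in>J. l i * inner (a i) (x - z))"
    by (simp add: inner_sum_left)
  also have "\<dots> = (\<Sum>i\<in>J. l i * (inner (a i) x - b i))"
    by (rule sum.cong) (auto simp: J_def active_set_def inner_diff_right)
  also have "\<dots> \<le> (\<Sum>i\<in>J. l i * violation a b I x)"
    using l(1) assms(1) by (intro sum_mono mult_left_mono constraint_excess_le_violation)
      (auto simp: J_def active_set_def)
  also have "\<dots> \<le> M * norm (x - z) * violation a b I x"
    using mult_right_mono[OF l(3) violation_nonneg] by (simp add: sum_distrib_right[symmetric])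
  finally show ?thesis
    using M(1) violation_nonneg[of a b I x] unfolding z_def[symmetric]
    by (cases "x - z = 0") (auto simp: power2_eq_square mult_ac)
qed

lemma hoffman_error_bound:
  fixes a :: "'i \<Rightarrow> 'a::euclidean_space"
  assumes "finite I" "feasible_set a b I \<noteq> {}"
  shows "\<exists>\<tau>\<ge>0. \<forall>x. \<exists>s\<in>feasible_set a b I. norm (x - s) \<le> \<tau> * violation a b I x"
proof -
  have "\<forall>\<^sub>F M in at_top. 0 \<le> M \<and> (\<forall>J\<in>Pow I. bounded_conic_representation a J M)"
    using assms(1) by (intro eventually_conj eventually_ge_at_top eventually_ball_finite)
      (auto intro: eventually_bounded_conic_representation finite_subset)
  then obtain M where M: "0 \<le> M" "\<And>J. J \<subseteq> I \<Longrightarrow> bounded_conic_representation a J M"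
    using eventually_happens'[OF trivial_limit_at_top_linorder] by blast
  then show ?thesis
    using closest_point_distance_le_violation[OF assms M] closest_point_in_set[OF closed_feasible_set assms(2)]
    by blast
qed

lemma infeasible_violation_gap:
  fixes a :: "'i \<Rightarrow> 'a::euclidean_space"
  assumes "finite I" "feasible_set a b I = {}"
  shows "\<exists>\<delta>>0. \<forall>x. \<delta> \<le> violation a b I x"
proof -
  \<comment> \<open>Farkas for the homogenised constraints: otherwise a separating (h', s) with s < 0
    would make h' / (-s) feasible.\<close>
  have "((0::'a), -1::real) \<in> conic_combinations (\<lambda>i. (a i, b i)) I"
  proof (rule ccontr)
    assume "((0::'a), -1::real) \<notin> conic_combinations (\<lambda>i. (a i, b i)) I"
    then obtain h where h: "0 < inner h ((0::'a), -1::real)" "\<forall>i\<in>I. inner h (a i, b i) \<le> 0"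
      using farkas_alternative[OF assms(1)] by blast
    obtain h' s where "h = (h', s)" by (cases h)
    with h have "s < 0" "\<forall>i\<in>I. inner (a i) h' \<le> - s * b i"
      by (auto simp: inner_Pair inner_commute add.commute add_eq_0_iff2 le_minus_iff)
    then have "(1 / - s) *\<^sub>R h' \<in> feasible_set a b I"
      by (auto simp: feasible_set_def field_simps)
    with assms(2) show False by blast
  qed
  then obtain l where l: "\<forall>i\<in>I. 0 \<le> l i" "((0::'a), -1::real) = (\<Sum>i\<in>I. l i *\<^sub>R (a i, b i))"
    by (auto simp: conic_combinations_def)
  have la: "(\<Sum>i\<in>I. l i *\<^sub>R a i) = 0"
    using arg_cong[OF l(2), of fst] by (simp add: fst_sum)
  have lb: "(\<Sum>i\<in>I. l i * b i) = -1"
    using arg_cong[OF l(2), of snd] by (simp add: snd_sum)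
  have bound: "1 \<le> (\<Sum>i\<in>I. l i) * violation a b I x" for x
  proof -
    have "(\<Sum>i\<in>I. l i * inner (a i) x) = inner (\<Sum>i\<in>I. l i *\<^sub>R a i) x"
      by (simp add: inner_sum_left)
    then have "1 = (\<Sum>i\<in>I. l i * (inner (a i) x - b i))"
      using la lb by (simp add: right_diff_distrib sum_subtractf)
    also have "\<dots> \<le> (\<Sum>i\<in>I. l i * violation a b I x)"
      using l(1) assms(1) by (intro sum_mono mult_left_mono constraint_excess_le_violation) auto
    finally show ?thesis by (simp add: sum_distrib_right)
  qed
  then have "0 < (\<Sum>i\<in>I. l i)"
    using l(1) violation_nonneg[of a b I 0] by (smt (verit) mult_nonpos_nonneg)
  with bound show ?thesis by (intro exI[of _ "1 / (\<Sum>i\<in>I. l i)"]) (simp add: field_simps)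
qed

text \<open>A single parameter t stands for the pair \<open>\<epsilon> = 1 / t\<close>, \<open>\<tau> = t\<close>: the property is then
  monotone in t, so finitely many instances combine along the filter at_top.\<close>

lemma eventually_perturbed_infeasible:
  fixes a :: "'i \<Rightarrow> 'a::euclidean_space" and e :: "'i \<Rightarrow> 'b::real_inner"
  assumes "finite I" "feasible_set a b I = {}"
  shows "\<forall>\<^sub>F t in at_top. \<forall>y w. norm y \<le> 1 / t \<longrightarrow> \<not> (\<forall>i\<in>I. inner (a i) w \<le> b i + inner (e i) y)"
proof -
  define E where "E = (\<Sum>i\<in>I. norm (e i))"
  have "0 \<le> E" unfolding E_def by (simp add: sum_nonneg)
  obtain \<delta> where \<delta>: "0 < \<delta>" "\<forall>x. \<delta> \<le> violation a b I x"
    using infeasible_violation_gap[OF assms] by blast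
  have "\<forall>\<^sub>F t in at_top. E / \<delta> < t" by (rule eventually_gt_at_top)
  then show ?thesis
  proof (rule eventually_mono, intro allI impI notI)
    fix t y w assume t: "E / \<delta> < t" and y: "norm y \<le> 1 / t"
      and w: "\<forall>i\<in>I. inner (a i) w \<le> b i + inner (e i) y"
    have "0 < t" using t \<open>0 \<le> E\<close> \<delta>(1) by (smt (verit) divide_nonneg_pos)
    have "\<delta> \<le> E * norm y"
      using \<delta>(2) violation_le_perturbation[OF w] unfolding E_def by (meson order_trans)
    also have "\<dots> \<le> E / t" using mult_left_mono[OF y \<open>0 \<le> E\<close>] by simp
    also have "\<dots> < \<delta>" using t \<open>0 < t\<close> \<delta>(1) by (simp add: field_simps)
    finally show False by simp
  qed
qed

lemma feasible_set_perturbation_bound: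
  fixes a :: "'i \<Rightarrow> 'a::euclidean_space" and e :: "'i \<Rightarrow> 'b::real_inner"
  assumes "finite I"
  shows "\<forall>\<^sub>F t in at_top. \<forall>y w. norm y \<le> 1 / t \<longrightarrow> (\<forall>i\<in>I. inner (a i) w \<le> b i + inner (e i) y) \<longrightarrow>
           (\<exists>w'\<in>feasible_set a b I. norm (w - w') \<le> t * norm y)"
proof (cases "feasible_set a b I = {}")
  case True
  show ?thesis
    using eventually_perturbed_infeasible[OF assms True, where e = e] by (rule eventually_mono) blast
next
  case False
  then obtain \<tau> where \<tau>: "0 \<le> \<tau>"
      "\<forall>x. \<exists>s\<in>feasible_set a b I. norm (x - s) \<le> \<tau> * violation a b I x"
    using hoffman_error_bound[OF assms] by blast
  define E where "E = (\<Sum>i\<in>I. norm (e i))"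
  have "\<forall>\<^sub>F t in at_top. \<tau> * E \<le> t" by (rule eventually_ge_at_top)
  then show ?thesis
  proof (rule eventually_mono, intro allI impI)
    fix t y w assume t: "\<tau> * E \<le> t" and w: "\<forall>i\<in>I. inner (a i) w \<le> b i + inner (e i) y"
    obtain s where s: "s \<in> feasible_set a b I" "norm (w - s) \<le> \<tau> * violation a b I w"
      using \<tau>(2) by blast
    note s(2)
    also have "\<tau> * violation a b I w \<le> \<tau> * (E * norm y)"
      using violation_le_perturbation[OF w] \<tau>(1) unfolding E_def by (rule mult_left_mono)
    also have "\<dots> \<le> t * norm y" using mult_right_mono[OF t norm_ge_zero] by (simp add: mult.assoc)
    finally show "\<exists>w'\<in>feasible_set a b I. norm (w - w') \<le> t * norm y" using s(1) by blast
  qed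
qed

section \<open>KKT points of a self-adjoint quadratic form over a polyhedron\<close>

text \<open>K is a guess for the active set. The system is linear in (p, l) with the perturbation y in
  the right-hand side only; for y = 0 its solutions are KKT pairs.\<close>

definition perturbed_kkt ::
    "('a::euclidean_space \<Rightarrow> 'a) \<Rightarrow> ('k::finite \<Rightarrow> 'a) \<Rightarrow> ('k \<Rightarrow> real) \<Rightarrow> 'k set \<Rightarrow> 'a \<Rightarrow> 'a \<Rightarrow> real^'k \<Rightarrow> bool"
  where "perturbed_kkt A a b K y p l \<longleftrightarrow>
    (\<forall>k. inner (a k) p \<le> b k + inner (a k) y) \<and> (\<forall>k\<in>K. b k + inner (a k) y \<le> inner (a k) p) \<and>
    (\<forall>k. 0 \<le> l $ k) \<and> (\<forall>k\<in>-K. l $ k \<le> 0) \<and> y + A p = (\<Sum>k\<in>UNIV. l $ k *\<^sub>R a k)"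

text \<open>The same system as a list of inequalities on (p, l): a triple (c, e, \<beta>) stands for
  \<open>\<langle>c, (p, l)\<rangle> \<le> \<beta> + \<langle>e, y\<rangle>\<close>, and the two families indexed by Basis encode the vector
  equation coordinatewise.\<close>

definition kkt_constraints ::
    "('a::euclidean_space \<Rightarrow> 'a) \<Rightarrow> ('k::finite \<Rightarrow> 'a) \<Rightarrow> ('k \<Rightarrow> real) \<Rightarrow> 'k set
      \<Rightarrow> (('a \<times> (real^'k)) \<times> 'a \<times> real) set"
  where "kkt_constraints A a b K =
    (\<lambda>k. ((a k, 0), a k, b k)) ` UNIV \<union>
    (\<lambda>k. ((- a k, 0), - a k, - b k)) ` K \<union>
    (\<lambda>k. ((0, - axis k 1), 0, 0)) ` UNIV \<union>
    (\<lambda>k. ((0, axis k 1), 0, 0)) ` (- K) \<union>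
    (\<lambda>u. ((A u, \<chi> k. - inner u (a k)), - u, 0)) ` Basis \<union>
    (\<lambda>u. ((- A u, \<chi> k. inner u (a k)), u, 0)) ` Basis"

lemma finite_kkt_constraints: "finite (kkt_constraints A a b K)"
  unfolding kkt_constraints_def by simp

lemma kkt_constraints_iff:
  fixes A :: "'a::euclidean_space \<Rightarrow> 'a" and a :: "'k::finite \<Rightarrow> 'a"
  assumes "\<forall>x y. inner (A x) y = inner x (A y)"
  shows "(\<forall>q\<in>kkt_constraints A a b K. inner (fst q) (p, l) \<le> snd (snd q) + inner (fst (snd q)) y)
     \<longleftrightarrow> perturbed_kkt A a b K y p l"
proof -
  let ?s = "\<Sum>k\<in>UNIV. l $ k *\<^sub>R a k"
  have row: "inner (A u, \<chi> k. - inner u (a k)) (p, l) = inner u (A p - ?s)"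
    and row': "inner (- A u, \<chi> k. inner u (a k)) (p, l) = - inner u (A p - ?s)" for u
    by (simp_all add: inner_Pair inner_vec_def assms inner_diff_right inner_sum_right sum_negf
        mult.commute)
  have "inner u (A p - ?s) \<le> 0 + inner (- u) y \<and> - inner u (A p - ?s) \<le> 0 + inner u y
      \<longleftrightarrow> inner (y + A p - ?s) u = 0" for u
    by (auto simp: inner_diff_right inner_add_right inner_commute)
  then have "(\<forall>u\<in>Basis. inner (A u, \<chi> k. - inner u (a k)) (p, l) \<le> 0 + inner (- u) y) \<and>
      (\<forall>u\<in>Basis. inner (- A u, \<chi> k. inner u (a k)) (p, l) \<le> 0 + inner u y)
      \<longleftrightarrow> (\<forall>u\<in>Basis. inner (y + A p - ?s) u = 0)"
    unfolding row row' ball_conj_distrib[symmetric] by simp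
  also have "\<dots> \<longleftrightarrow> y + A p = ?s" by (simp add: euclidean_all_zero_iff)
  finally have rows: "(\<forall>u\<in>Basis. inner (A u, \<chi> k. - inner u (a k)) (p, l) \<le> 0 + inner (- u) y) \<and>
      (\<forall>u\<in>Basis. inner (- A u, \<chi> k. inner u (a k)) (p, l) \<le> 0 + inner u y)
      \<longleftrightarrow> y + A p = ?s" .
  show ?thesis
    unfolding kkt_constraints_def ball_Un Ball_image_comp o_def fst_conv snd_conv conj_assoc rows
    by (simp add: perturbed_kkt_def inner_Pair inner_axis' inner_commute[of _ "axis _ _"]
        Compl_eq_Diff_UNIV) (auto simp: algebra_simps)
qed

lemma perturbed_kkt_of_projection:
  fixes A :: "'a::euclidean_space \<Rightarrow> 'a" and a :: "'k::finite \<Rightarrow> 'a" and x :: 'a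
  assumes "feasible_set a b UNIV \<noteq> {}"
  defines "z \<equiv> closest_point (feasible_set a b UNIV) (x + A x)"
  shows "\<exists>l. perturbed_kkt A a b (active_set a b UNIV z) (x - z) x l"
proof -
  have z: "z \<in> feasible_set a b UNIV"
    unfolding z_def using closed_feasible_set assms(1) by (rule closest_point_in_set)
  have "x + A x - z \<in> conic_combinations a (active_set a b UNIV z)"
    using closest_point_normal_cone[OF convex_feasible_set closed_feasible_set]
      normal_cone_feasible_set[OF finite z] unfolding z_def by blast
  then obtain l where l: "\<forall>k. 0 \<le> l k" "\<forall>k\<in>UNIV - active_set a b UNIV z. l k = 0"
      "x + A x - z = (\<Sum>k\<in>UNIV. l k *\<^sub>R a k)"
    unfolding mem_conic_combinations_iff[OF finite subset_UNIV] by auto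
  have "perturbed_kkt A a b (active_set a b UNIV z) (x - z) x (\<chi> k. l k)"
    unfolding perturbed_kkt_def
  proof (intro conjI allI ballI)
    fix k
    show "inner (a k) x \<le> b k + inner (a k) (x - z)"
      using z by (simp add: feasible_set_def inner_diff_right)
    show "0 \<le> (\<chi> k. l k) $ k" using l(1) by simp
  next
    fix k assume "k \<in> active_set a b UNIV z"
    then show "b k + inner (a k) (x - z) \<le> inner (a k) x"
      by (simp add: active_set_def inner_diff_right)
  next
    fix k assume "k \<in> - active_set a b UNIV z"
    then show "(\<chi> k. l k) $ k \<le> 0" using l(2) by simp
  next
    show "x - z + A x = (\<Sum>k\<in>UNIV. (\<chi> k. l k) $ k *\<^sub>R a k)"
      using l(3) by (simp add: algebra_simps)
  qed
  then show ?thesis ..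
qed

lemma kkt_point_of_perturbed_kkt_zero:
  fixes A :: "'a::euclidean_space \<Rightarrow> 'a" and a :: "'k::finite \<Rightarrow> 'a"
  assumes "perturbed_kkt A a b K 0 p l"
  shows "p \<in> feasible_set a b UNIV" "A p \<in> normal_cone (feasible_set a b UNIV) p"
proof -
  have kkt: "\<forall>k. inner (a k) p \<le> b k" "\<forall>k\<in>K. b k \<le> inner (a k) p" "\<forall>k. 0 \<le> l $ k"
      "\<forall>k\<in>-K. l $ k \<le> 0" "A p = (\<Sum>k\<in>UNIV. l $ k *\<^sub>R a k)"
    using assms by (simp_all add: perturbed_kkt_def)
  then show "p \<in> feasible_set a b UNIV" by (simp add: feasible_set_def)
  have "l $ k = 0" if "k \<in> UNIV - active_set a b UNIV p" for k
  proof -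
    have "k \<notin> K"
      using that kkt(1,2) order_antisym[of "inner (a k) p" "b k"] by (auto simp: active_set_def)
    then show ?thesis using kkt(3,4) order_antisym[of "l $ k" 0] by simp
  qed
  then have "A p \<in> conic_combinations a (active_set a b UNIV p)"
    unfolding mem_conic_combinations_iff[OF finite subset_UNIV]
    using kkt(3,5) by (intro exI[of _ "\<lambda>k. l $ k"]) auto
  then show "A p \<in> normal_cone (feasible_set a b UNIV) p"
    using conic_combinations_active_subset_normal_cone by blast
qed

lemma eventually_perturbed_kkt_stable:
  fixes A :: "'a::euclidean_space \<Rightarrow> 'a" and a :: "'k::finite \<Rightarrow> 'a"
  assumes "\<forall>x y. inner (A x) y = inner x (A y)"
  shows "\<forall>\<^sub>F t in at_top. \<forall>K y p l. norm y \<le> 1 / t \<longrightarrow> perturbed_kkt A a b K y p l \<longrightarrow>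
           (\<exists>p' l'. perturbed_kkt A a b K 0 p' l' \<and> norm (p - p') \<le> t * norm y)"
proof -
  let ?Q = "kkt_constraints A a b"
  have "\<forall>\<^sub>F t in at_top. \<forall>K\<in>UNIV. \<forall>y w. norm y \<le> 1 / t \<longrightarrow>
      (\<forall>q\<in>?Q K. inner (fst q) w \<le> snd (snd q) + inner (fst (snd q)) y) \<longrightarrow>
      (\<exists>w'\<in>feasible_set fst (\<lambda>q. snd (snd q)) (?Q K). norm (w - w') \<le> t * norm y)"
    by (intro eventually_ball_finite ballI feasible_set_perturbation_bound finite_kkt_constraints)
      simp
  then show ?thesis
  proof (rule eventually_mono, intro allI impI)
    fix t K y p l
    assume t: "\<forall>K\<in>UNIV. \<forall>y w. norm y \<le> 1 / t \<longrightarrow>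
      (\<forall>q\<in>?Q K. inner (fst q) w \<le> snd (snd q) + inner (fst (snd q)) y) \<longrightarrow>
      (\<exists>w'\<in>feasible_set fst (\<lambda>q. snd (snd q)) (?Q K). norm (w - w') \<le> t * norm y)"
      and y: "norm y \<le> 1 / t" and kkt: "perturbed_kkt A a b K y p l"
    have "\<forall>q\<in>?Q K. inner (fst q) (p, l) \<le> snd (snd q) + inner (fst (snd q)) y"
      using kkt kkt_constraints_iff[OF assms] by blast
    then obtain w' where w': "w' \<in> feasible_set fst (\<lambda>q. snd (snd q)) (?Q K)"
        "norm ((p, l) - w') \<le> t * norm y"
      using t y by blast
    obtain p' l' where pl': "w' = (p', l')" by (cases w')
    have "perturbed_kkt A a b K 0 p' l'"
      using w'(1) kkt_constraints_iff[OF assms, of a b K p' l' 0] by (simp add: pl' feasible_set_def)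
    moreover have "norm (p - p') \<le> t * norm y"
      using norm_fst_le[of "p - p'" "l - l'"] w'(2) by (simp add: pl')
    ultimately show "\<exists>p' l'. perturbed_kkt A a b K 0 p' l' \<and> norm (p - p') \<le> t * norm y"
      by blast
  qed
qed

theorem kkt_residual_error_bound:
  fixes A :: "'a::euclidean_space \<Rightarrow> 'a" and a :: "'k::finite \<Rightarrow> 'a"
  assumes "\<forall>x y. inner (A x) y = inner x (A y)" and C: "C = feasible_set a b UNIV" "C \<noteq> {}"
  shows "\<exists>\<epsilon>>0. \<exists>\<tau>>0. \<forall>x. norm (x - closest_point C (x + A x)) \<le> \<epsilon> \<longrightarrow>
           (\<exists>p\<in>C. A p \<in> normal_cone C p \<and> norm (x - p) \<le> \<tau> * norm (x - closest_point C (x + A x)))"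
proof -
  have "\<forall>\<^sub>F t in at_top. 1 \<le> t \<and> (\<forall>K y p l. norm y \<le> 1 / t \<longrightarrow> perturbed_kkt A a b K y p l \<longrightarrow>
           (\<exists>p' l'. perturbed_kkt A a b K 0 p' l' \<and> norm (p - p') \<le> t * norm y))"
    by (intro eventually_conj eventually_ge_at_top eventually_perturbed_kkt_stable assms(1))
  then obtain t where "1 \<le> t" and t: "\<And>K y p l. norm y \<le> 1 / t \<Longrightarrow> perturbed_kkt A a b K y p l \<Longrightarrow>
      \<exists>p' l'. perturbed_kkt A a b K 0 p' l' \<and> norm (p - p') \<le> t * norm y"
    using eventually_happens'[OF trivial_limit_at_top_linorder] by blast
  have "\<exists>p\<in>C. A p \<in> normal_cone C p \<and> norm (x - p) \<le> t * norm (x - closest_point C (x + A x))"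
    if x: "norm (x - closest_point C (x + A x)) \<le> 1 / t" for x
  proof -
    define z where "z = closest_point C (x + A x)"
    obtain l where "perturbed_kkt A a b (active_set a b UNIV z) (x - z) x l"
      using perturbed_kkt_of_projection C unfolding z_def by blast
    then obtain p l' where "perturbed_kkt A a b (active_set a b UNIV z) 0 p l'"
        "norm (x - p) \<le> t * norm (x - z)"
      using t x unfolding z_def by blast
    then show ?thesis using kkt_point_of_perturbed_kkt_zero C(1) unfolding z_def by blast
  qed
  moreover have "0 < 1 / t" "0 < t" using \<open>1 \<le> t\<close> by auto
  ultimately show ?thesis by blast
qed

section \<open>The Gromov-Wasserstein problem\<close>

lemma inner_matrix_eq_trace: "inner (x :: real^'m^'n) y = trace (x ** transpose y)"
  by (simp add: inner_vec_def trace_def matrix_matrix_mult_def transpose_def)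

lemma inner_matrix_mult_left:
  fixes M :: "real^'n^'k" and x :: "real^'m^'n"
  shows "inner (M ** x) y = inner x (transpose M ** y)"
proof -
  have "trace (M ** (x ** transpose y)) = trace ((x ** transpose y) ** M)"
    by (rule trace_mul_sym)
  then show ?thesis
    by (simp add: inner_matrix_eq_trace matrix_transpose_mul matrix_mul_assoc)
qed

lemma inner_matrix_mult_right:
  fixes N :: "real^'m^'k" and x :: "real^'k^'n"
  shows "inner (x ** N) y = inner x (y ** transpose N)"
  by (simp add: inner_matrix_eq_trace matrix_transpose_mul matrix_mul_assoc)

lemma inner_symmetric_sandwich:
  fixes DX :: "real^'n^'n" and DY :: "real^'m^'m" and x y :: "real^'m^'n"
  assumes "transpose DX = DX" "transpose DY = DY"
  shows "inner (DX ** x ** DY) y = inner x (DX ** y ** DY)"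
proof -
  have "inner (DX ** x ** DY) y = inner (DX ** x) (y ** transpose DY)"
    by (rule inner_matrix_mult_right)
  also have "\<dots> = inner x (transpose DX ** (y ** transpose DY))"
    by (rule inner_matrix_mult_left)
  finally show ?thesis by (simp add: assms matrix_mul_assoc)
qed

lemma matrix_add_rdistrib: "(A + B) ** C = A ** C + B ** (C :: 'a::semiring_1^_^_)"
  by (vector matrix_matrix_mult_def sum.distrib[symmetric] field_simps)

lemma linear_sandwich: "linear (\<lambda>p :: real^'m^'n. DX ** p ** (DY :: real^'k^'m))"
  by (rule linearI)
    (simp_all add: matrix_add_ldistrib matrix_add_rdistrib matrix_scalar_ac scalar_matrix_assoc)

lemma has_derivative_gw_obj:
  fixes DX :: "real^'n^'n" and DY :: "real^'m^'m"
  assumes "transpose DX = DX" "transpose DY = DY"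
  shows "(gw_obj DX DY has_derivative (\<lambda>h. inner (- 2 *\<^sub>R (DX ** p ** DY)) h)) (at p)"
proof -
  have "gw_obj DX DY = (\<lambda>p. - inner (DX ** p ** DY) p)"
    by (simp add: fun_eq_iff gw_obj_def inner_matrix_eq_trace)
  moreover have "((\<lambda>p. - inner (DX ** p ** DY) p) has_derivative
      (\<lambda>h. - (inner (DX ** p ** DY) h + inner (DX ** h ** DY) p))) (at p)"
    by (intro has_derivative_minus has_derivative_inner has_derivative_ident
        linear_imp_has_derivative linear_sandwich)
  moreover have "inner (DX ** h ** DY) p = inner (DX ** p ** DY) h" for h
    using inner_symmetric_sandwich[OF assms, of h p] by (simp add: inner_commute)
  ultimately show ?thesis by simp
qed

text \<open>C1 and C2 as feasible sets: the constraints \<open>-\<pi>\<^sub>i\<^sub>j \<le> 0\<close>, and each marginal equation as a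
  pair of opposite inequalities selected by the boolean.\<close>

definition row_constraint :: "('n \<times> 'm) + ('n \<times> bool) \<Rightarrow> real^'m^'n" where
  "row_constraint k = (case k of Inl (i, j) \<Rightarrow> - axis i (axis j 1)
     | Inr (i, s) \<Rightarrow> (if s then 1 else -1) *\<^sub>R axis i 1)"

definition row_bound :: "real^'n \<Rightarrow> ('n \<times> 'm) + ('n \<times> bool) \<Rightarrow> real" where
  "row_bound \<mu> k = (case k of Inl _ \<Rightarrow> 0 | Inr (i, s) \<Rightarrow> (if s then 1 else -1) * \<mu> $ i)"

definition column_constraint :: "('n \<times> 'm) + ('m \<times> bool) \<Rightarrow> real^'m^'n" where
  "column_constraint k = (case k of Inl (i, j) \<Rightarrow> - axis i (axis j 1)
     | Inr (j, s) \<Rightarrow> (if s then 1 else -1) *\<^sub>R (\<chi> i. axis j 1))"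

definition column_bound :: "real^'m \<Rightarrow> ('n \<times> 'm) + ('m \<times> bool) \<Rightarrow> real" where
  "column_bound \<nu> k = (case k of Inl _ \<Rightarrow> 0 | Inr (j, s) \<Rightarrow> (if s then 1 else -1) * \<nu> $ j)"

lemma inner_one_vec: "inner (1 :: real^'n) x = (\<Sum>i\<in>UNIV. x $ i)"
  by (simp add: inner_vec_def)

lemma inner_const_axis: "inner (\<chi> i. axis j 1 :: real^'m^'n) p = (\<Sum>i\<in>UNIV. p $ i $ j)"
  unfolding inner_vec_def[of "\<chi> i. axis j 1"] by (simp add: inner_axis')

lemma C1_eq_feasible_set:
  fixes \<mu> :: "real^'n"
  shows "(C1 \<mu> :: (real^'m^'n) set) = feasible_set row_constraint (row_bound \<mu>) UNIV"
proof -
  have "p \<in> feasible_set row_constraint (row_bound \<mu>) UNIV \<longleftrightarrow>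
      (\<forall>i j. 0 \<le> p $ i $ j) \<and> (\<forall>i. (\<Sum>j\<in>UNIV. p $ i $ j) = \<mu> $ i)" for p :: "real^'m^'n"
    by (auto simp: feasible_set_def row_constraint_def row_bound_def split_sum_all all_bool_eq
        inner_axis' inner_one_vec intro: order_antisym)
  then show ?thesis
    by (auto simp: C1_def vec_eq_iff matrix_vector_mult_def)
qed

lemma C2_eq_feasible_set:
  fixes \<nu> :: "real^'m"
  shows "(C2 \<nu> :: (real^'m^'n) set) = feasible_set column_constraint (column_bound \<nu>) UNIV"
proof -
  have "p \<in> feasible_set column_constraint (column_bound \<nu>) UNIV \<longleftrightarrow>
      (\<forall>i j. 0 \<le> p $ i $ j) \<and> (\<forall>j. (\<Sum>i\<in>UNIV. p $ i $ j) = \<nu> $ j)" for p :: "real^'m^'n"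
    by (auto simp: feasible_set_def column_constraint_def column_bound_def split_sum_all all_bool_eq
        inner_axis' inner_const_axis intro: order_antisym)
  then show ?thesis
    by (auto simp: C2_def vec_eq_iff matrix_vector_mult_def transpose_def)
qed

lemma product_coupling_mem:
  fixes \<mu> :: "real^'n" and \<nu> :: "real^'m"
  assumes "\<forall>i. 0 \<le> \<mu> $ i" "(\<Sum>i\<in>UNIV. \<mu> $ i) = 1" "\<forall>j. 0 \<le> \<nu> $ j" "(\<Sum>j\<in>UNIV. \<nu> $ j) = 1"
  shows "(\<chi> i j. \<mu> $ i * \<nu> $ j) \<in> C1 \<mu> \<inter> C2 \<nu>"
  using assms
  by (simp add: C1_def C2_def vec_eq_iff matrix_vector_mult_def transpose_def
      sum_distrib_left[symmetric] sum_distrib_right[symmetric])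

lemma kkt_point_in_crit_set:
  assumes "transpose DX = DX" "transpose DY = DY" and "p \<in> C1 \<mu> \<inter> C2 \<nu>"
    and "DX ** p ** DY \<in> normal_cone (C1 \<mu> \<inter> C2 \<nu>) p"
  shows "p \<in> crit_set \<mu> \<nu> DX DY"
proof -
  obtain u w where uw: "u \<in> normal_cone (C1 \<mu>) p" "w \<in> normal_cone (C2 \<nu>) p" "DX ** p ** DY = u + w"
    using normal_cone_Int_feasible_sets assms(3,4)
    unfolding C1_eq_feasible_set C2_eq_feasible_set by blast
  show ?thesis
    unfolding crit_set_def
  proof (intro CollectI conjI exI)
    show "p \<in> C1 \<mu> \<inter> C2 \<nu>" by (rule assms(3))
    show "(gw_obj DX DY has_derivative inner (- 2 *\<^sub>R (DX ** p ** DY))) (at p)"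
      by (rule has_derivative_gw_obj[OF assms(1,2)])
    show "2 *\<^sub>R u \<in> normal_cone (C1 \<mu>) p" "2 *\<^sub>R w \<in> normal_cone (C2 \<nu>) p"
      using uw(1,2) by (simp_all add: normal_cone_scaleR)
    show "- 2 *\<^sub>R (DX ** p ** DY) + 2 *\<^sub>R u + 2 *\<^sub>R w = 0"
      by (simp add: uw(3) scaleR_add_right)
  qed
qed

theorem proposition1:
  fixes \<mu> :: "real^'n" and \<nu> :: "real^'m"
    and DX :: "real^'n^'n" and DY :: "real^'m^'m"
  assumes "\<forall>i. 0 \<le> \<mu> $ i" and "(\<Sum>i\<in>UNIV. \<mu> $ i) = 1"
    and "\<forall>j. 0 \<le> \<nu> $ j" and "(\<Sum>j\<in>UNIV. \<nu> $ j) = 1"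
    and "transpose DX = DX" and "transpose DY = DY"
  shows "\<exists>\<epsilon>>0. \<exists>\<tau>>0. \<forall>p :: real^'m^'n.
    norm (p - closest_point (C1 \<mu> \<inter> C2 \<nu>) (p + DX ** p ** DY)) \<le> \<epsilon> \<longrightarrow>
    infdist p (crit_set \<mu> \<nu> DX DY)
      \<le> \<tau> * norm (p - closest_point (C1 \<mu> \<inter> C2 \<nu>) (p + DX ** p ** DY))"
proof -
  let ?C = "C1 \<mu> \<inter> C2 \<nu> :: (real^'m^'n) set"
  have C: "?C = feasible_set (case_sum row_constraint column_constraint)
      (case_sum (row_bound \<mu>) (column_bound \<nu>)) UNIV"
    by (simp add: C1_eq_feasible_set C2_eq_feasible_set feasible_set_Int_case_sum)
  have nonempty: "?C \<noteq> {}" using product_coupling_mem[OF assms(1-4)] by blast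
  have sandwich: "\<forall>x y. inner (DX ** x ** DY) y = inner x (DX ** y ** DY)"
    using inner_symmetric_sandwich[OF assms(5,6)] by blast
  obtain \<epsilon> \<tau> where "0 < \<epsilon>" "0 < \<tau>" and bound:
    "\<forall>x. norm (x - closest_point ?C (x + DX ** x ** DY)) \<le> \<epsilon> \<longrightarrow>
      (\<exists>p\<in>?C. DX ** p ** DY \<in> normal_cone ?C p \<and>
        norm (x - p) \<le> \<tau> * norm (x - closest_point ?C (x + DX ** x ** DY)))"
    using kkt_residual_error_bound[OF sandwich C nonempty] by blast
  have "infdist x (crit_set \<mu> \<nu> DX DY) \<le> \<tau> * norm (x - closest_point ?C (x + DX ** x ** DY))"
    if small: "norm (x - closest_point ?C (x + DX ** x ** DY)) \<le> \<epsilon>" for x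
  proof -
    obtain p where "p \<in> ?C" "DX ** p ** DY \<in> normal_cone ?C p"
        "norm (x - p) \<le> \<tau> * norm (x - closest_point ?C (x + DX ** x ** DY))"
      using bound small by blast
    moreover have "p \<in> crit_set \<mu> \<nu> DX DY"
      using kkt_point_in_crit_set[OF assms(5,6)] calculation(1,2) by blast
    ultimately show ?thesis
      using infdist_le[of p "crit_set \<mu> \<nu> DX DY" x] by (simp add: dist_norm)
  qed
  with \<open>0 < \<epsilon>\<close> \<open>0 < \<tau>\<close> show ?thesis by blast
qed

end
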